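(* Let $p \geq 2$ and $n_1,\dots,n_p \geq 1$. Then the complete partite graph $K_{n_1+n_2, n_3, \ldots, n_p}$ is a minor of $K_{n_1,n_2,\ldots,n_p}$. Similarly, for every $k \geq 0$, every graph obtained from $K_{n_1,n_2,\ldots,n_p}$ by removing $k$ edges has as a minor a graph obtained from $K_{n_1+n_2,n_3,\ldots,n_p}$ by removing $k$ edges.
   Context: $K_{n_1,\ldots,n_p}$ denotes the complete $p$-partite graph with $n_i$ vertices in the $i$-th part (vertices are adjacent iff they lie in different parts). A graph $H$ is a minor of $G$ if $H$ is obtained from $G$ by a finite sequence of edge contractions, vertex deletions and edge deletions. *)

theory Defs
  imports Main
begin

text \<open>A (finite simple) graph: a vertex set and a set of edges, each edge a 2-element set of vertices.\<close>
type_synonym 'a graph = "'a set \<times> 'a set set"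

definition verts :: "'a graph \<Rightarrow> 'a set" where "verts G = fst G"
definition edges :: "'a graph \<Rightarrow> 'a set set" where "edges G = snd G"

definition delete_vertex :: "'a \<Rightarrow> 'a graph \<Rightarrow> 'a graph" where
  "delete_vertex v G = (verts G - {v}, {e \<in> edges G. v \<notin> e})"

definition delete_edge :: "'a set \<Rightarrow> 'a graph \<Rightarrow> 'a graph" where
  "delete_edge e G = (verts G, edges G - {e})"

text \<open>Contract the edge {u,v}: v is merged into u, loops and parallel edges vanish.\<close>
definition contract_edge :: "'a \<Rightarrow> 'a \<Rightarrow> 'a graph \<Rightarrow> 'a graph" where
  "contract_edge u v G = (verts G - {v},
     {(\<lambda>x. if x = v then u else x) ` e | e. e \<in> edges G \<and> e \<noteq> {u, v}})"

inductive minor_step :: "'a graph \<Rightarrow> 'a graph \<Rightarrow> bool" where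
  del_v: "v \<in> verts G \<Longrightarrow> minor_step G (delete_vertex v G)"
| del_e: "e \<in> edges G \<Longrightarrow> minor_step G (delete_edge e G)"
| contr: "{u, v} \<in> edges G \<Longrightarrow> u \<noteq> v \<Longrightarrow> minor_step G (contract_edge u v G)"

definition graph_iso :: "'a graph \<Rightarrow> 'b graph \<Rightarrow> bool" where
  "graph_iso G H \<longleftrightarrow> (\<exists>f. bij_betw f (verts G) (verts H) \<and> edges H = (\<lambda>e. f ` e) ` edges G)"

definition is_minor :: "'b graph \<Rightarrow> 'a graph \<Rightarrow> bool" where
  "is_minor H G \<longleftrightarrow> (\<exists>G'. minor_step\<^sup>*\<^sup>* G G' \<and> graph_iso G' H)"

text \<open>Complete multipartite graph K_{n_1,...,n_p} for ns = [n_1,...,n_p]: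
  vertex (i,j) is the j-th vertex of the i-th part.\<close>
definition cpg_verts :: "nat list \<Rightarrow> (nat \<times> nat) set" where
  "cpg_verts ns = {(i, j). i < length ns \<and> j < ns ! i}"

definition complete_partite :: "nat list \<Rightarrow> (nat \<times> nat) graph" where
  "complete_partite ns = (cpg_verts ns,
     {{x, y} | x y. x \<in> cpg_verts ns \<and> y \<in> cpg_verts ns \<and> fst x \<noteq> fst y})"

definition remove_edges :: "'a graph \<Rightarrow> 'a set set \<Rightarrow> 'a graph" where
  "remove_edges G F = (verts G, edges G - F)"

end

theory Submission
  imports Defs
begin

text \<open>Merging the first two parts of K(n1, n2, ...) needs no contraction: once the second
  part is relabelled as the vertices n1, ..., n1 + n2 - 1 of the first, K(n1 + n2, ...) is the
  spanning subgraph obtained by deleting all edges between the two parts. If a set F of k edges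
  is removed from K(n1, n2, ...), at most k of them survive this deletion; removing further
  edges of K(n1 + n2, ...) until exactly k (or all) are gone again leaves a relabelled spanning
  subgraph, hence a minor.\<close>

lemma graph_eq_verts_edges: "G = (verts G, edges G)"
  by (simp add: verts_def edges_def)

lemma minor_steps_delete_edges:
  assumes "finite D"
  shows "minor_step\<^sup>*\<^sup>* (V, E) (V, E - D)"
  using assms
proof (induction D rule: finite_induct)
  case empty
  then show ?case by simp
next
  case (insert e D)
  show ?case
  proof (cases "e \<in> E - D")
    case True
    then have "minor_step (V, E - D) (delete_edge e (V, E - D))"
      by (intro minor_step.del_e) (simp add: edges_def)
    moreover have "delete_edge e (V, E - D) = (V, E - insert e D)"
      by (auto simp: delete_edge_def verts_def edges_def)
    ultimately show ?thesis
      using insert.IH by (metis rtranclp.rtrancl_into_rtrancl)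
  next
    case False
    then have "E - insert e D = E - D" by auto
    then show ?thesis using insert.IH by simp
  qed
qed

lemma graph_iso_image:
  assumes "bij_betw f V W"
  shows "graph_iso (V, E) (W, (\<lambda>e. f ` e) ` E)"
  using assms unfolding graph_iso_def verts_def edges_def by auto

lemma is_minor_if_iso_spanning_subgraph:
  assumes "finite (edges G)" and "bij_betw f (verts G) (verts H)"
    and "edges H = (\<lambda>e. f ` e) ` (edges G - D)"
  shows "is_minor H G"
proof -
  have "minor_step\<^sup>*\<^sup>* (verts G, edges G) (verts G, edges G - (edges G \<inter> D))"
    using assms(1) by (intro minor_steps_delete_edges) simp
  moreover have "edges G - (edges G \<inter> D) = edges G - D" by blast
  moreover have "graph_iso (verts G, edges G - D) H"
    using graph_iso_image[OF assms(2)] assms(3) graph_eq_verts_edges[of H] by metis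
  ultimately show ?thesis
    unfolding is_minor_def using graph_eq_verts_edges[of G] by metis
qed

lemma is_minor_remove_edges_if_iso_spanning_subgraph:
  assumes "finite (edges G)" and "bij_betw f (verts G) (verts H)"
    and H: "edges H = (\<lambda>e. f ` e) ` (edges G - D)"
    and "F \<subseteq> edges G"
  shows "\<exists>F' \<subseteq> edges H. card F' = min (card F) (card (edges H))
           \<and> is_minor (remove_edges H F') (remove_edges G F)"
proof -
  define F\<^sub>0 where "F\<^sub>0 = (\<lambda>e. f ` e) ` (F - D)"
  have "finite (edges H)"
    using assms(1) H by simp
  have "F\<^sub>0 \<subseteq> edges H"
    using assms(4) H unfolding F\<^sub>0_def by blast
  have "finite F"
    using assms(1,4) by (rule finite_subset[rotated])
  then have "card F\<^sub>0 \<le> card F"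
    unfolding F\<^sub>0_def by (meson Diff_subset card_image_le card_mono finite_Diff le_trans)
  moreover have "card F\<^sub>0 \<le> card (edges H)"
    using \<open>finite (edges H)\<close> \<open>F\<^sub>0 \<subseteq> edges H\<close> by (rule card_mono)
  ultimately have "card F\<^sub>0 \<le> min (card F) (card (edges H))"
    by simp
  then obtain F' where F': "F\<^sub>0 \<subseteq> F'" "F' \<subseteq> edges H"
      "card F' = min (card F) (card (edges H))"
    using exists_subset_between[OF _ min.cobounded2 \<open>F\<^sub>0 \<subseteq> edges H\<close> \<open>finite (edges H)\<close>]
    by blast
  have "edges H - F' = (\<lambda>e. f ` e) ` (edges G - F - (D \<union> {e. f ` e \<in> F'}))"
  proof (intro equalityI subsetI)
    fix h
    assume "h \<in> edges H - F'"
    then obtain e where "e \<in> edges G - D" "h = f ` e" "h \<notin> F'"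
      using H by blast
    moreover have "e \<notin> F"
      using calculation F'(1) unfolding F\<^sub>0_def by blast
    ultimately show "h \<in> (\<lambda>e. f ` e) ` (edges G - F - (D \<union> {e. f ` e \<in> F'}))"
      by blast
  next
    fix h
    assume "h \<in> (\<lambda>e. f ` e) ` (edges G - F - (D \<union> {e. f ` e \<in> F'}))"
    then show "h \<in> edges H - F'"
      unfolding H by auto
  qed
  then have "is_minor (remove_edges H F') (remove_edges G F)"
    using assms(1,2) by (intro is_minor_if_iso_spanning_subgraph)
      (simp_all add: remove_edges_def verts_def edges_def)
  with F' show ?thesis
    by blast
qed

lemma image_pair_sets:
  assumes "f ` V = W" and "\<And>x y. x \<in> V \<Longrightarrow> y \<in> V \<Longrightarrow> Q (f x) (f y) \<longleftrightarrow> P x y"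
  shows "(\<lambda>e. f ` e) ` {{x, y} | x y. x \<in> V \<and> y \<in> V \<and> P x y}
           = {{a, b} | a b. a \<in> W \<and> b \<in> W \<and> Q a b}"
proof (intro equalityI subsetI)
  fix e
  assume "e \<in> (\<lambda>e. f ` e) ` {{x, y} | x y. x \<in> V \<and> y \<in> V \<and> P x y}"
  then obtain x y where "x \<in> V" "y \<in> V" "P x y" "e = {f x, f y}"
    by auto
  then show "e \<in> {{a, b} | a b. a \<in> W \<and> b \<in> W \<and> Q a b}"
    using assms by blast
next
  fix e
  assume "e \<in> {{a, b} | a b. a \<in> W \<and> b \<in> W \<and> Q a b}"
  then obtain x y where "x \<in> V" "y \<in> V" "Q (f x) (f y)" "e = f ` {x, y}"
    using assms(1) by auto
  then show "e \<in> (\<lambda>e. f ` e) ` {{x, y} | x y. x \<in> V \<and> y \<in> V \<and> P x y}"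
    using assms(2) by blast
qed

lemma pair_set_diff_Pow:
  "{{x, y} | x y. P x y} - Pow S = {{x, y} | x y. P x y \<and> \<not> (x \<in> S \<and> y \<in> S)}"
  by blast

lemma finite_cpg_verts: "finite (cpg_verts ns)"
proof -
  have "cpg_verts ns = Sigma {..<length ns} (\<lambda>i. {..<ns ! i})"
    by (auto simp: cpg_verts_def)
  then show ?thesis by simp
qed

lemma edges_complete_partite:
  "edges (complete_partite ns) = {{x, y} | x y. x \<in> cpg_verts ns \<and> y \<in> cpg_verts ns \<and> fst x \<noteq> fst y}"
  by (simp add: complete_partite_def edges_def)

lemma verts_complete_partite: "verts (complete_partite ns) = cpg_verts ns"
  by (simp add: complete_partite_def verts_def)

lemma finite_edges_complete_partite: "finite (edges (complete_partite ns))"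
proof -
  have "edges (complete_partite ns) \<subseteq> Pow (cpg_verts ns)"
    by (auto simp: edges_complete_partite)
  then show ?thesis using finite_cpg_verts by (meson finite_Pow_iff finite_subset)
qed

definition merge_first_parts :: "nat \<Rightarrow> nat \<times> nat \<Rightarrow> nat \<times> nat" where
  "merge_first_parts n\<^sub>1 = (\<lambda>(i, j). if i = 0 then (0, j) else if i = 1 then (0, n\<^sub>1 + j) else (i - 1, j))"

definition split_first_part :: "nat \<Rightarrow> nat \<times> nat \<Rightarrow> nat \<times> nat" where
  "split_first_part n\<^sub>1 = (\<lambda>(i, j). if i = 0 then (if j < n\<^sub>1 then (0, j) else (1, j - n\<^sub>1)) else (i + 1, j))"

lemma fst_merge_first_parts: "fst (merge_first_parts n\<^sub>1 x) = (if fst x < 2 then 0 else fst x - 1)"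
  by (auto simp: merge_first_parts_def split: prod.splits)

lemma bij_betw_merge_first_parts:
  "bij_betw (merge_first_parts n\<^sub>1) (cpg_verts (n\<^sub>1 # n\<^sub>2 # ns)) (cpg_verts ((n\<^sub>1 + n\<^sub>2) # ns))"
proof (rule bij_betw_byWitness[where f' = "split_first_part n\<^sub>1"])
  show "\<forall>x \<in> cpg_verts (n\<^sub>1 # n\<^sub>2 # ns). split_first_part n\<^sub>1 (merge_first_parts n\<^sub>1 x) = x"
    by (auto simp: cpg_verts_def merge_first_parts_def split_first_part_def)
  show "\<forall>y \<in> cpg_verts ((n\<^sub>1 + n\<^sub>2) # ns). merge_first_parts n\<^sub>1 (split_first_part n\<^sub>1 y) = y"
    by (auto simp: cpg_verts_def merge_first_parts_def split_first_part_def)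
  show "merge_first_parts n\<^sub>1 ` cpg_verts (n\<^sub>1 # n\<^sub>2 # ns) \<subseteq> cpg_verts ((n\<^sub>1 + n\<^sub>2) # ns)"
    by (auto simp: cpg_verts_def merge_first_parts_def nth_Cons' split: if_splits)
  show "split_first_part n\<^sub>1 ` cpg_verts ((n\<^sub>1 + n\<^sub>2) # ns) \<subseteq> cpg_verts (n\<^sub>1 # n\<^sub>2 # ns)"
    by (auto simp: cpg_verts_def split_first_part_def nth_Cons' split: if_splits)
qed

lemma edges_complete_partite_merge_first_parts:
  "edges (complete_partite ((n\<^sub>1 + n\<^sub>2) # ns))
     = (\<lambda>e. merge_first_parts n\<^sub>1 ` e) ` (edges (complete_partite (n\<^sub>1 # n\<^sub>2 # ns)) - Pow {x. fst x < 2})"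
proof -
  have diff: "edges (complete_partite (n\<^sub>1 # n\<^sub>2 # ns)) - Pow {x. fst x < 2}
    = {{x, y} | x y. x \<in> cpg_verts (n\<^sub>1 # n\<^sub>2 # ns) \<and> y \<in> cpg_verts (n\<^sub>1 # n\<^sub>2 # ns)
                      \<and> fst x \<noteq> fst y \<and> \<not> (fst x < 2 \<and> fst y < 2)}"
    unfolding edges_complete_partite pair_set_diff_Pow by (intro Collect_cong) auto
  show ?thesis
    unfolding diff edges_complete_partite[of "(n\<^sub>1 + n\<^sub>2) # ns"]
    by (rule image_pair_sets[OF bij_betw_imp_surj_on[OF bij_betw_merge_first_parts], symmetric])
      (auto simp: fst_merge_first_parts)
qed

theorem lemma5:
  fixes n1 n2 :: nat and rest :: "nat list"
  assumes "n1 \<ge> 1" and "n2 \<ge> 1" and "\<forall>n \<in> set rest. n \<ge> 1"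
  shows "is_minor (complete_partite ((n1 + n2) # rest)) (complete_partite (n1 # n2 # rest))
    \<and> (\<forall>k F. F \<subseteq> edges (complete_partite (n1 # n2 # rest)) \<and> card F = k \<longrightarrow>
          (\<exists>F'. F' \<subseteq> edges (complete_partite ((n1 + n2) # rest))
              \<and> card F' = min k (card (edges (complete_partite ((n1 + n2) # rest))))
              \<and> is_minor (remove_edges (complete_partite ((n1 + n2) # rest)) F')
                         (remove_edges (complete_partite (n1 # n2 # rest)) F)))"
proof -
  note spanning = finite_edges_complete_partite
    bij_betw_merge_first_parts[of n1 n2 rest, folded verts_complete_partite]
    edges_complete_partite_merge_first_parts
  show ?thesis
    using is_minor_if_iso_spanning_subgraph[OF spanning]
      is_minor_remove_edges_if_iso_spanning_subgraph[OF spanning]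
    by blast
qed

end
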